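(* Let $(Q,d)$ be a compact metric space, $p_0:Q\to[0,+\infty]$ a function which is not identically $+\infty$, $f$ a nonnegative Radon measure on $Q$, and take the transportation cost $c(x,y)=d(x,y)$. Consider the problem of maximizing $$F(p)=\int_Q\Big(\max_{y\in T_p(x)}p(y)\Big)\,df(x)$$ over $\mathcal A=\{p:Q\to\overline{\mathbb{R}}\ :\ p\le p_0 \text{ on } Q,\ p\text{ lower semicontinuous}\}$. Then an optimal solution is given by $$p_{opt}(x)=\max\big\{p(x)\ :\ p\in\mathrm{Lip}_{1,d}(Q),\ p\le p_0\big\}.$$
   Context: For $p\in\mathcal A$ and $x\in Q$: $v_p(x)=\min_{y\in Q}\{d(x,y)+p(y)\}$ and $T_p(x)=\{y\in Q\ :\ d(x,y)+p(y)=v_p(x)\}$. $\mathrm{Lip}_{1,d}(Q)$ denotes the class of functions on $Q$ that are Lipschitz with respect to $d$ with Lipschitz constant at most $1$. *)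

theory Defs
  imports "HOL-Analysis.Analysis"
begin

definition lsc_on :: "'a::metric_space set \<Rightarrow> ('a \<Rightarrow> ereal) \<Rightarrow> bool" where
  "lsc_on Q p \<longleftrightarrow> (\<forall>x\<in>Q. \<forall>c. c < p x \<longrightarrow> (\<forall>\<^sub>F y in at x within Q. c < p y))"

definition admissible :: "'a::metric_space set \<Rightarrow> ('a \<Rightarrow> ereal) \<Rightarrow> ('a \<Rightarrow> ereal) set" where
  "admissible Q p0 = {p. (\<forall>x\<in>Q. p x \<le> p0 x) \<and> lsc_on Q p}"

definition vfun :: "'a::metric_space set \<Rightarrow> ('a \<Rightarrow> ereal) \<Rightarrow> 'a \<Rightarrow> ereal" where
  "vfun Q p x = (INF y\<in>Q. ereal (dist x y) + p y)"

definition Tset :: "'a::metric_space set \<Rightarrow> ('a \<Rightarrow> ereal) \<Rightarrow> 'a \<Rightarrow> 'a set" where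
  "Tset Q p x = {y\<in>Q. ereal (dist x y) + p y = vfun Q p x}"

definition gfun :: "'a::metric_space set \<Rightarrow> ('a \<Rightarrow> ereal) \<Rightarrow> 'a \<Rightarrow> ereal" where
  "gfun Q p x = (SUP y\<in>Tset Q p x. p y)"

definition Ffun :: "'a::metric_space set \<Rightarrow> 'a measure \<Rightarrow> ('a \<Rightarrow> ereal) \<Rightarrow> ereal" where
  "Ffun Q f p = enn2ereal (\<integral>\<^sup>+ x. e2ennreal (gfun Q p x) \<partial>f)
                - enn2ereal (\<integral>\<^sup>+ x. e2ennreal (- gfun Q p x) \<partial>f)"

definition popt :: "'a::metric_space set \<Rightarrow> ('a \<Rightarrow> ereal) \<Rightarrow> 'a \<Rightarrow> ereal" where
  "popt Q p0 x = (SUP p\<in>{p :: 'a \<Rightarrow> real. 1-lipschitz_on Q p \<and> (\<forall>y\<in>Q. ereal (p y) \<le> p0 y)}. ereal (p x))"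

end

theory Submission
  imports Defs
begin

text \<open>The value function \<open>v_p0\<close> is the inf-convolution of \<open>p0\<close> with the distance, hence the
  largest 1-Lipschitz minorant of \<open>p0\<close>; so \<open>popt = v_p0\<close> is real-valued and 1-Lipschitz, in
  particular lower semicontinuous. For admissible \<open>p\<close> and \<open>y \<in> T_p(x)\<close> we have
  \<open>p(y) \<le> d(x,y) + p(y) = v_p(x) \<le> v_p0(x)\<close>, so the integrand of \<open>F(p)\<close> is at most \<open>popt(x)\<close>.
  Conversely a 1-Lipschitz \<open>p\<close> satisfies \<open>v_p = p\<close>, so \<open>x \<in> T_p(x)\<close> and the integrand of
  \<open>F(popt)\<close> is at least \<open>popt(x)\<close>. Thus the integrands are compared pointwise.\<close>

lemma vfun_le_dist_add: "z \<in> Q \<Longrightarrow> vfun Q p x \<le> ereal (dist x z) + p z"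
  unfolding vfun_def by (rule INF_lower) simp

lemma vfun_le_self: "x \<in> Q \<Longrightarrow> vfun Q p x \<le> p x"
  using vfun_le_dist_add[of x Q p x] by simp

lemma vfun_mono: "(\<And>y. y \<in> Q \<Longrightarrow> p y \<le> p' y) \<Longrightarrow> vfun Q p x \<le> vfun Q p' x"
  unfolding vfun_def by (intro INF_mono) (auto intro: add_left_mono)

lemma vfun_nonneg: "(\<And>y. y \<in> Q \<Longrightarrow> 0 \<le> p y) \<Longrightarrow> 0 \<le> vfun Q p x"
  unfolding vfun_def by (auto intro!: INF_greatest add_nonneg_nonneg)

lemma vfun_neq_PInf: "z \<in> Q \<Longrightarrow> p z \<noteq> \<infinity> \<Longrightarrow> vfun Q p x \<noteq> \<infinity>"
  using vfun_le_dist_add[of z Q p x] by (cases "p z") auto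

lemma vfun_le_dist_add_vfun: "vfun Q p x \<le> ereal (dist x y) + vfun Q p y"
proof -
  have "vfun Q p x - ereal (dist x y) \<le> vfun Q p y"
    unfolding vfun_def[of Q p y]
  proof (rule INF_greatest)
    fix z assume "z \<in> Q"
    have "vfun Q p x \<le> ereal (dist x z) + p z" using \<open>z \<in> Q\<close> by (rule vfun_le_dist_add)
    also have "\<dots> \<le> ereal (dist y z) + p z + ereal (dist x y)"
      using dist_triangle[of x z y] by (cases "p z") auto
    finally show "vfun Q p x - ereal (dist x y) \<le> ereal (dist y z) + p z"
      by (simp add: ereal_minus_le)
  qed
  then show ?thesis by (simp add: ereal_minus_le add.commute)
qed

lemma lipschitz_le_vfun:
  assumes "1-lipschitz_on Q p" "\<And>y. y \<in> Q \<Longrightarrow> ereal (p y) \<le> p0 y" "x \<in> Q"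
  shows "ereal (p x) \<le> vfun Q p0 x"
  unfolding vfun_def
proof (rule INF_greatest)
  fix z assume "z \<in> Q"
  have "ereal (p x) \<le> ereal (dist x z) + ereal (p z)"
    using lipschitz_onD[OF assms(1,3) \<open>z \<in> Q\<close>] by (simp add: dist_real_def)
  also have "\<dots> \<le> ereal (dist x z) + p0 z"
    using assms(2)[OF \<open>z \<in> Q\<close>] by (rule add_left_mono)
  finally show "ereal (p x) \<le> ereal (dist x z) + p0 z" .
qed

lemma lipschitz_real_vfun:
  assumes "\<And>x. x \<in> Q \<Longrightarrow> \<bar>vfun Q p x\<bar> \<noteq> \<infinity>"
  shows "1-lipschitz_on Q (\<lambda>x. real_of_ereal (vfun Q p x))"
proof (rule lipschitz_onI)
  fix x y assume "x \<in> Q" "y \<in> Q"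
  with assms have "\<bar>vfun Q p x\<bar> \<noteq> \<infinity>" "\<bar>vfun Q p y\<bar> \<noteq> \<infinity>" by auto
  with vfun_le_dist_add_vfun[of Q p x y] vfun_le_dist_add_vfun[of Q p y x]
  show "dist (real_of_ereal (vfun Q p x)) (real_of_ereal (vfun Q p y)) \<le> 1 * dist x y"
    by (cases "vfun Q p x"; cases "vfun Q p y") (auto simp: dist_real_def dist_commute abs_le_iff)
qed simp

lemma popt_eq_vfun:
  assumes "\<And>x. x \<in> Q \<Longrightarrow> \<bar>vfun Q p0 x\<bar> \<noteq> \<infinity>" "x \<in> Q"
  shows "popt Q p0 x = vfun Q p0 x"
  unfolding popt_def
proof (rule antisym)
  show "(SUP p\<in>{p. 1-lipschitz_on Q p \<and> (\<forall>y\<in>Q. ereal (p y) \<le> p0 y)}. ereal (p x)) \<le> vfun Q p0 x"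
    using \<open>x \<in> Q\<close> by (auto intro!: SUP_least lipschitz_le_vfun)
  have "ereal (real_of_ereal (vfun Q p0 y)) \<le> p0 y" if "y \<in> Q" for y
    using assms(1)[OF that] vfun_le_self[OF that, of p0] by (cases "vfun Q p0 y") auto
  then show "vfun Q p0 x \<le> (SUP p\<in>{p. 1-lipschitz_on Q p \<and> (\<forall>y\<in>Q. ereal (p y) \<le> p0 y)}. ereal (p x))"
    using lipschitz_real_vfun[OF assms(1)] assms
    by (intro SUP_upper2[of "\<lambda>x. real_of_ereal (vfun Q p0 x)"]) (auto simp: ereal_real')
qed

lemma gfun_le_vfun: "gfun Q p x \<le> vfun Q p x"
  unfolding gfun_def Tset_def
proof (rule SUP_least)
  fix y assume "y \<in> {y \<in> Q. ereal (dist x y) + p y = vfun Q p x}"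
  then have "vfun Q p x = ereal (dist x y) + p y" by simp
  also have "p y \<le> \<dots>" by (simp add: add_increasing)
  finally show "p y \<le> vfun Q p x" .
qed

lemma lipschitz_le_gfun:
  assumes "1-lipschitz_on Q q" "\<And>y. y \<in> Q \<Longrightarrow> p y = ereal (q y)" "x \<in> Q"
  shows "p x \<le> gfun Q p x"
proof -
  have "p x \<le> vfun Q p x"
    using lipschitz_le_vfun[OF assms(1) _ assms(3), of p] assms(2,3) by simp
  with vfun_le_self[OF assms(3)] have "vfun Q p x = p x" by (rule antisym)
  then have "x \<in> Tset Q p x" unfolding Tset_def using assms(3) by simp
  then show ?thesis unfolding gfun_def by (rule SUP_upper)
qed

lemma lsc_on_continuous_on:
  assumes "continuous_on Q q" "\<And>x. x \<in> Q \<Longrightarrow> p x = ereal (q x)"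
  shows "lsc_on Q p"
  unfolding lsc_on_def
proof (intro ballI allI impI)
  fix x c assume "x \<in> Q" "c < p x"
  have in_Q: "\<forall>\<^sub>F y in at x within Q. y \<in> Q"
    by (simp add: eventually_at_filter)
  show "\<forall>\<^sub>F y in at x within Q. c < p y"
  proof (cases c)
    case (real r)
    have "(q \<longlongrightarrow> q x) (at x within Q)"
      using assms(1) \<open>x \<in> Q\<close> by (simp add: continuous_on_def)
    moreover have "r < q x" using \<open>c < p x\<close> assms(2)[OF \<open>x \<in> Q\<close>] real by simp
    ultimately have "\<forall>\<^sub>F y in at x within Q. r < q y" by (rule order_tendstoD)
    with in_Q show ?thesis by eventually_elim (simp add: assms(2) real)
  next
    case PInf with \<open>c < p x\<close> show ?thesis by simp
  next
    case MInf from in_Q show ?thesis by eventually_elim (simp add: assms(2) MInf)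
  qed
qed

lemma Ffun_mono:
  assumes "\<And>x. x \<in> space f \<Longrightarrow> gfun Q p x \<le> gfun Q p' x"
  shows "Ffun Q f p \<le> Ffun Q f p'"
  unfolding Ffun_def
proof (rule ereal_minus_mono)
  show "enn2ereal (\<integral>\<^sup>+ x. e2ennreal (gfun Q p x) \<partial>f) \<le> enn2ereal (\<integral>\<^sup>+ x. e2ennreal (gfun Q p' x) \<partial>f)"
    using assms by (auto simp: less_eq_ennreal.rep_eq[symmetric] intro!: nn_integral_mono e2ennreal_mono)
  show "enn2ereal (\<integral>\<^sup>+ x. e2ennreal (- gfun Q p' x) \<partial>f) \<le> enn2ereal (\<integral>\<^sup>+ x. e2ennreal (- gfun Q p x) \<partial>f)"
    using assms by (auto simp: less_eq_ennreal.rep_eq[symmetric] intro!: nn_integral_mono e2ennreal_mono)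
qed

theorem theorem3p1:
  fixes Q :: "'a::metric_space set" and p0 :: "'a \<Rightarrow> ereal" and f :: "'a measure"
  assumes "compact Q"
    and "\<forall>x\<in>Q. 0 \<le> p0 x"
    and "\<exists>x\<in>Q. p0 x \<noteq> \<infinity>"
    and "space f = Q" and "sets f = sets (restrict_space borel Q)"
    and "finite_measure f"
  shows "(\<forall>x\<in>Q. \<exists>p :: 'a \<Rightarrow> real. 1-lipschitz_on Q p \<and> (\<forall>y\<in>Q. ereal (p y) \<le> p0 y)
                    \<and> ereal (p x) = popt Q p0 x)
       \<and> popt Q p0 \<in> admissible Q p0
       \<and> (\<forall>p\<in>admissible Q p0. Ffun Q f p \<le> Ffun Q f (popt Q p0))"
proof -
  obtain x0 where "x0 \<in> Q" "p0 x0 \<noteq> \<infinity>" using assms(3) by blast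
  then have finite: "\<bar>vfun Q p0 x\<bar> \<noteq> \<infinity>" for x
    using vfun_neq_PInf vfun_nonneg[of Q p0 x] assms(2) by (cases "vfun Q p0 x") auto
  define q where "q x = real_of_ereal (vfun Q p0 x)" for x
  have lip: "1-lipschitz_on Q q"
    unfolding q_def using finite by (rule lipschitz_real_vfun)
  have popt_q: "popt Q p0 x = ereal (q x)" if "x \<in> Q" for x
    using popt_eq_vfun[OF finite that] finite[of x] by (simp add: q_def ereal_real')
  have q_le: "ereal (q y) \<le> p0 y" if "y \<in> Q" for y
    using popt_q[OF that] popt_eq_vfun[OF finite that] vfun_le_self[OF that, of p0] by simp
  have "popt Q p0 \<in> admissible Q p0"
    unfolding admissible_def using q_le popt_q
    by (auto intro: lsc_on_continuous_on[OF lipschitz_on_continuous_on[OF lip]])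
  moreover have "Ffun Q f p \<le> Ffun Q f (popt Q p0)" if "p \<in> admissible Q p0" for p
  proof (rule Ffun_mono)
    fix x assume "x \<in> space f"
    with assms(4) have "x \<in> Q" by simp
    have "gfun Q p x \<le> vfun Q p x" by (rule gfun_le_vfun)
    also have "\<dots> \<le> vfun Q p0 x" using that by (auto simp: admissible_def intro: vfun_mono)
    also have "\<dots> = popt Q p0 x" using popt_eq_vfun[OF finite \<open>x \<in> Q\<close>] by simp
    also have "\<dots> \<le> gfun Q (popt Q p0) x" using lip popt_q \<open>x \<in> Q\<close> by (rule lipschitz_le_gfun)
    finally show "gfun Q p x \<le> gfun Q (popt Q p0) x" .
  qed
  ultimately show ?thesis using lip q_le popt_q by metis
qed

end
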